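(* Let $G$ be a $2$-connected graph of order at least three. If $\sigma_2(G)\ge 2\widetilde{\alpha}(G)$, then $G$ is hamiltonian (i.e., $G$ contains a cycle through every vertex).
   Context: All graphs are finite and simple. For a graph $G$ that is not complete, $\sigma_2(G)=\min\{d_G(u)+d_G(v): u,v\in V(G),\ u\ne v,\ uv\notin E(G)\}$; if $G$ is complete, $\sigma_2(G)=\infty$. An $(s,t)$-bipartite-hole in $G$ consists of two disjoint vertex sets $S,T\subseteq V(G)$ with $|S|=s$, $|T|=t$ and no edge of $G$ having one endpoint in $S$ and the other in $T$. The bipartite-hole-number $\widetilde{\alpha}(G)$ is the minimum integer $k$ such that there exist positive integers $s,t$ with $s+t=k+1$ for which $G$ contains no $(s,t)$-bipartite-hole. *)

theory Defs
  imports Main "HOL-Library.Extended_Nat"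
begin

definition simple_graph :: "'a set \<Rightarrow> ('a \<Rightarrow> 'a \<Rightarrow> bool) \<Rightarrow> bool" where
  "simple_graph V E \<longleftrightarrow> finite V \<and> (\<forall>u v. E u v \<longrightarrow> E v u) \<and> (\<forall>v. \<not> E v v)
     \<and> (\<forall>u v. E u v \<longrightarrow> u \<in> V \<and> v \<in> V)"

definition degree :: "'a set \<Rightarrow> ('a \<Rightarrow> 'a \<Rightarrow> bool) \<Rightarrow> 'a \<Rightarrow> nat" where
  "degree V E v = card {u \<in> V. E v u}"

text \<open>sigma_2: minimum degree sum over non-adjacent pairs of distinct vertices;
  infinity (top of enat, the Inf of the empty set) if the graph is complete.\<close>
definition sigma2 :: "'a set \<Rightarrow> ('a \<Rightarrow> 'a \<Rightarrow> bool) \<Rightarrow> enat" where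
  "sigma2 V E = (INF p \<in> {(u, v). u \<in> V \<and> v \<in> V \<and> u \<noteq> v \<and> \<not> E u v}.
                    enat (degree V E (fst p) + degree V E (snd p)))"

definition has_bipartite_hole :: "'a set \<Rightarrow> ('a \<Rightarrow> 'a \<Rightarrow> bool) \<Rightarrow> nat \<Rightarrow> nat \<Rightarrow> bool" where
  "has_bipartite_hole V E s t \<longleftrightarrow> (\<exists>S T. S \<subseteq> V \<and> T \<subseteq> V \<and> S \<inter> T = {} \<and>
      card S = s \<and> card T = t \<and> (\<forall>x\<in>S. \<forall>y\<in>T. \<not> E x y))"

definition bipartite_hole_number :: "'a set \<Rightarrow> ('a \<Rightarrow> 'a \<Rightarrow> bool) \<Rightarrow> nat" where
  "bipartite_hole_number V E =
     (LEAST k. \<exists>s t. 0 < s \<and> 0 < t \<and> s + t = k + 1 \<and> \<not> has_bipartite_hole V E s t)"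

definition connected_on :: "'a set \<Rightarrow> ('a \<Rightarrow> 'a \<Rightarrow> bool) \<Rightarrow> bool" where
  "connected_on W E \<longleftrightarrow> W \<noteq> {} \<and>
     (\<forall>u\<in>W. \<forall>v\<in>W. (u, v) \<in> {(x, y). x \<in> W \<and> y \<in> W \<and> E x y}\<^sup>*)"

definition two_connected :: "'a set \<Rightarrow> ('a \<Rightarrow> 'a \<Rightarrow> bool) \<Rightarrow> bool" where
  "two_connected V E \<longleftrightarrow> card V \<ge> 3 \<and> connected_on V E \<and> (\<forall>x\<in>V. connected_on (V - {x}) E)"

definition hamiltonian :: "'a set \<Rightarrow> ('a \<Rightarrow> 'a \<Rightarrow> bool) \<Rightarrow> bool" where
  "hamiltonian V E \<longleftrightarrow> (\<exists>vs. distinct vs \<and> set vs = V \<and> length vs \<ge> 3 \<and>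
     (\<forall>i < length vs. E (vs ! i) (vs ! ((i + 1) mod length vs))))"

end

theory Submission
  imports Defs
begin

text \<open>Suppose G is not hamiltonian, let P = p_0 \<dots> p_(L-1) be a longest path, and let s + t = k + 1
  with no (s, t)-bipartite hole, where k is the bipartite-hole number. If the vertices of P could
  be arranged in a cycle, connectivity would give a longer path or a Hamilton cycle. Hence if both ends of P had degree at least k, the neighbour positions of the
  two ends could be split at a threshold so that s predecessors of one and t successors of the
  other span no edge: an (s, t)-bipartite hole. So one end, say p_(L-1), has degree below k,
  and then p_0 has degree at least k by sigma_2 \<ge> 2k. Applying this to the paths on V(P) that
  start at p_0, each of their other ends has degree below k and is therefore adjacent to
  p_(L-1). Rotating P accordingly shows that the vertices after the first neighbour p_g of
  p_(L-1) have all their neighbours among p_(g-1), \<dots>, p_(L-1), and even among p_g, \<dots>, p_(L-1)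
  unless g = 1 (when a cycle closes). So p_(g-1) or p_g is a cut vertex, contradicting
  2-connectivity.\<close>

subsection \<open>Counting below and above a threshold\<close>

lemma exists_rank_threshold:
  fixes A :: "nat set"
  assumes "0 < s" "s \<le> card A"
  shows "\<exists>\<tau>. s \<le> card {a\<in>A. a \<le> \<tau>} \<and> card {a\<in>A. a < \<tau>} < s"
proof -
  have "finite A" "A \<noteq> {}" using assms by (auto intro: card_ge_0_finite)
  then have "{a\<in>A. a \<le> Max A} = A" by auto
  then have ex: "\<exists>\<tau>. s \<le> card {a\<in>A. a \<le> \<tau>}" using assms by metis
  define \<tau> where "\<tau> = (LEAST \<tau>. s \<le> card {a\<in>A. a \<le> \<tau>})"
  have "s \<le> card {a\<in>A. a \<le> \<tau>}" unfolding \<tau>_def by (rule LeastI_ex[OF ex])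
  moreover have "card {a\<in>A. a < \<tau>} < s"
  proof (cases "\<tau> = 0")
    case True
    then show ?thesis using assms by simp
  next
    case False
    then have "{a\<in>A. a < \<tau>} = {a\<in>A. a \<le> \<tau> - 1}" by auto
    moreover have "\<not> s \<le> card {a\<in>A. a \<le> \<tau> - 1}"
    proof
      assume "s \<le> card {a\<in>A. a \<le> \<tau> - 1}"
      then have "\<tau> \<le> \<tau> - 1" unfolding \<tau>_def by (rule Least_le)
      then show False using False by simp
    qed
    ultimately show ?thesis by simp
  qed
  ultimately show ?thesis by blast
qed

lemma card_ge_threshold:
  fixes A :: "nat set"
  assumes "finite A" "card {a\<in>A. a < \<tau>} < s" "s + t \<le> card A + 1"
  shows "t \<le> card {a\<in>A. \<tau> \<le> a}"
proof -
  have "card A = card ({a\<in>A. a < \<tau>} \<union> {a\<in>A. \<tau> \<le> a})"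
    by (rule arg_cong[where f = card]) auto
  also have "\<dots> = card {a\<in>A. a < \<tau>} + card {a\<in>A. \<tau> \<le> a}"
    by (rule card_Un_disjoint) (use assms(1) in auto)
  finally have "card A = card {a\<in>A. a < \<tau>} + card {a\<in>A. \<tau> \<le> a}" .
  then show ?thesis using assms(2,3) by linarith
qed

lemma threshold_split:
  fixes A B :: "nat set"
  assumes "0 < s" "0 < t" "s + t \<le> card A + 1" "s + t \<le> card B + 1"
  shows "\<exists>\<tau>. (s \<le> card {a\<in>A. a \<le> \<tau>} \<and> t \<le> card {b\<in>B. \<tau> \<le> b})
           \<or> (s \<le> card {b\<in>B. b \<le> \<tau>} \<and> t \<le> card {a\<in>A. \<tau> \<le> a})"
proof -
  have fin: "finite A" "finite B" using assms by (auto intro: card_ge_0_finite)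
  obtain \<tau>A where A: "s \<le> card {a\<in>A. a \<le> \<tau>A}" "card {a\<in>A. a < \<tau>A} < s"
    using exists_rank_threshold[of s A] assms by auto
  obtain \<tau>B where B: "s \<le> card {b\<in>B. b \<le> \<tau>B}" "card {b\<in>B. b < \<tau>B} < s"
    using exists_rank_threshold[of s B] assms by auto
  show ?thesis
  proof (cases "\<tau>A \<le> \<tau>B")
    case True
    then have "card {b\<in>B. b < \<tau>A} \<le> card {b\<in>B. b < \<tau>B}" using fin by (intro card_mono) auto
    then have "card {b\<in>B. b < \<tau>A} < s" using B(2) by linarith
    then have "t \<le> card {b\<in>B. \<tau>A \<le> b}" by (rule card_ge_threshold[OF fin(2) _ assms(4)])
    then show ?thesis using A(1) by blast
  next
    case False
    then have "card {a\<in>A. a < \<tau>B} \<le> card {a\<in>A. a < \<tau>A}" using fin by (intro card_mono) auto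
    then have "card {a\<in>A. a < \<tau>B} < s" using A(2) by linarith
    then have "t \<le> card {a\<in>A. \<tau>B \<le> a}" by (rule card_ge_threshold[OF fin(1) _ assms(3)])
    then show ?thesis using B(1) by blast
  qed
qed

lemma connected_on_crossing_edge:
  assumes "connected_on W E" "X \<subseteq> W" "x \<in> X" "y \<in> W - X"
  shows "\<exists>u\<in>X. \<exists>v\<in>W - X. E u v"
proof -
  let ?R = "{(x, y). x \<in> W \<and> y \<in> W \<and> E x y}"
  have "(x, y) \<in> ?R\<^sup>*" using assms unfolding connected_on_def by auto
  then have "x \<in> X \<Longrightarrow> y \<notin> X \<Longrightarrow> \<exists>u\<in>X. \<exists>v\<in>W - X. E u v"
  proof (induction rule: rtrancl_induct)
    case (step y z)
    then show ?case by (cases "y \<in> X") auto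
  qed simp
  then show ?thesis using assms by auto
qed

lemma not_connected_on_Diff_if_closed:
  assumes "Z \<subseteq> V - {c}" "b \<in> Z" "a \<in> V - {c}" "a \<notin> Z"
    and "\<And>z w. z \<in> Z \<Longrightarrow> E z w \<Longrightarrow> w \<in> Z \<or> w = c"
  shows "\<not> connected_on (V - {c}) E"
proof
  assume "connected_on (V - {c}) E"
  then obtain u v where "u \<in> Z" "v \<in> (V - {c}) - Z" "E u v"
    using connected_on_crossing_edge[of "V - {c}" E Z b a] assms by blast
  then show False using assms(5)[of u v] by auto
qed

lemma hamiltonianI:
  assumes "distinct vs" "set vs = V" "3 \<le> length vs" "successively E vs" "E (last vs) (hd vs)"
  shows "hamiltonian V E"
  unfolding hamiltonian_def
proof (intro exI conjI allI impI)
  fix i assume i: "i < length vs"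
  show "E (vs ! i) (vs ! ((i + 1) mod length vs))"
  proof (cases "Suc i < length vs")
    case True
    then show ?thesis using successively_nth[OF assms(4) True] by simp
  next
    case False
    then have "i = length vs - 1" using i by simp
    moreover have "Suc (length vs - 1) mod length vs = 0" using assms(3) by (subst Suc_diff_1) auto
    moreover have "vs \<noteq> []" using assms(3) by auto
    ultimately show ?thesis using assms(5) last_conv_nth[of vs] hd_conv_nth[of vs] by auto
  qed
qed (use assms in auto)

lemma has_bipartite_hole_if_card_ge:
  assumes "S \<subseteq> V" "T \<subseteq> V" "S \<inter> T = {}" "s \<le> card S" "t \<le> card T"
    and "\<And>x y. x \<in> S \<Longrightarrow> y \<in> T \<Longrightarrow> \<not> E x y"
  shows "has_bipartite_hole V E s t"
proof -
  obtain S' where "S' \<subseteq> S" "card S' = s" using obtain_subset_with_card_n[OF assms(4)] by blast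
  moreover obtain T' where "T' \<subseteq> T" "card T' = t" using obtain_subset_with_card_n[OF assms(5)] by blast
  ultimately have "S' \<subseteq> V \<and> T' \<subseteq> V \<and> S' \<inter> T' = {} \<and> card S' = s \<and> card T' = t
      \<and> (\<forall>x\<in>S'. \<forall>y\<in>T'. \<not> E x y)"
    using assms(1-3,6) by blast
  then show ?thesis unfolding has_bipartite_hole_def by blast
qed

lemma bipartite_hole_number_witness:
  assumes "finite V"
  obtains s t where "0 < s" "0 < t" "s + t = bipartite_hole_number V E + 1"
    "\<not> has_bipartite_hole V E s t"
proof -
  have "\<not> has_bipartite_hole V E (card V + 1) 1"
    unfolding has_bipartite_hole_def using card_mono[OF assms] by fastforce
  then have "\<exists>k s t. 0 < s \<and> 0 < t \<and> s + t = k + 1 \<and> \<not> has_bipartite_hole V E s t"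
    by (intro exI conjI) auto
  from LeastI_ex[OF this] show ?thesis
    using that unfolding bipartite_hole_number_def by blast
qed

lemma degree_sum_ge_if_sigma2_ge:
  assumes "enat m \<le> sigma2 V E" "u \<in> V" "v \<in> V" "u \<noteq> v" "\<not> E u v"
  shows "m \<le> degree V E u + degree V E v"
proof -
  have "sigma2 V E \<le> enat (degree V E u + degree V E v)"
    unfolding sigma2_def using assms(2-5) by (intro INF_lower2[of "(u, v)"]) auto
  then have "enat m \<le> enat (degree V E u + degree V E v)" by (rule order_trans[OF assms(1)])
  then show ?thesis by simp
qed

subsection \<open>Longest paths\<close>

lemma successively_upt:
  "(\<And>i. m \<le> i \<Longrightarrow> Suc i < n \<Longrightarrow> P i (Suc i)) \<Longrightarrow> successively P [m..<n]"
proof (induction n)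
  case 0
  then show ?case by simp
next
  case (Suc n)
  show ?case
  proof (cases "m < n")
    case True
    then have "[m..<Suc n] = [m..<n] @ [n]" by simp
    moreover have "successively P [m..<n]" using Suc by auto
    moreover have "P (n - 1) n" using Suc.prems[of "n - 1"] True by auto
    ultimately show ?thesis using True by (auto simp: successively_append_iff)
  next
    case False
    then show ?thesis by (cases "m = n") auto
  qed
qed

locale sgraph =
  fixes V :: "'a set" and E :: "'a \<Rightarrow> 'a \<Rightarrow> bool"
  assumes finite_V: "finite V" and sym: "E u v \<Longrightarrow> E v u" and irrefl: "\<not> E v v"
    and edge_in_V: "E u v \<Longrightarrow> u \<in> V"
begin

definition is_path :: "'a list \<Rightarrow> bool" where
  "is_path xs \<longleftrightarrow> distinct xs \<and> set xs \<subseteq> V \<and> successively E xs"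

lemma is_path_rev: "is_path xs \<Longrightarrow> is_path (rev xs)"
  using sym unfolding is_path_def by (auto intro: successively_mono)

lemma exists_longest_path:
  assumes "is_path xs"
  obtains ps where "is_path ps" "length xs \<le> length ps" "\<And>qs. is_path qs \<Longrightarrow> length qs \<le> length ps"
proof -
  have "\<forall>qs. is_path qs \<longrightarrow> length qs < card V + 1"
  proof (intro allI impI)
    fix qs assume "is_path qs"
    then have "distinct qs" "set qs \<subseteq> V" unfolding is_path_def by auto
    then have "length qs \<le> card V" using card_mono[OF finite_V] distinct_card by metis
    then show "length qs < card V + 1" by simp
  qed
  then obtain ps where "is_path ps" "\<forall>qs. is_path qs \<longrightarrow> length qs \<le> length ps"
    using ex_has_greatest_nat[of is_path xs length "card V + 1"] assms by blast
  then show ?thesis using that assms by blast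
qed

lemma exists_path3:
  assumes "two_connected V E"
  obtains u v w where "is_path [u, v, w]"
proof -
  have card_V: "3 \<le> card V" and conn: "connected_on V E"
    and no_cut: "\<And>x. x \<in> V \<Longrightarrow> connected_on (V - {x}) E"
    using assms unfolding two_connected_def by auto
  obtain v where v: "v \<in> V" using card_V by fastforce
  have "2 \<le> card (V - {v})" using card_V finite_V v by simp
  then obtain y where y: "y \<in> V - {v}" by (metis card.empty ex_in_conv not_numeral_le_zero)
  obtain u where u: "u \<in> V" "u \<noteq> v" "E v u"
    using connected_on_crossing_edge[OF conn, of "{v}" v y] v y by auto
  have "1 \<le> card (V - {u, v})" using card_V finite_V v u by (simp add: card_Diff_subset)
  then obtain y' where y': "y' \<in> V - {u, v}" by (metis card.empty ex_in_conv not_one_le_zero)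
  obtain w where w: "w \<in> V - {u}" "w \<noteq> v" "E v w"
    using connected_on_crossing_edge[OF no_cut[OF u(1)], of "{v}" v y'] v y' u by auto
  have "is_path [u, v, w]" using u w v sym unfolding is_path_def by auto
  then show ?thesis by (rule that)
qed

end

locale longest_path = sgraph +
  fixes ps :: "'a list"
  assumes path: "is_path ps"
    and longest: "is_path qs \<Longrightarrow> length qs \<le> length ps"
    and length_ge_3: "3 \<le> length ps"
begin

abbreviation L :: nat where "L \<equiv> length ps"

text \<open>Rearrangements of ps are encoded by lists of positions: a permutation of the indices that
  follows pos_edge describes a path on the vertex set of ps.\<close>

abbreviation pos_edge :: "nat \<Rightarrow> nat \<Rightarrow> bool" where "pos_edge i j \<equiv> E (ps!i) (ps!j)"

lemma distinct_ps: "distinct ps" and set_ps_subset: "set ps \<subseteq> V"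
  and successively_ps: "successively E ps"
  using path unfolding is_path_def by auto

lemma nth_in_V: "i < L \<Longrightarrow> ps!i \<in> V"
  using set_ps_subset nth_mem by blast

lemma nth_eq_iff: "i < L \<Longrightarrow> j < L \<Longrightarrow> ps!i = ps!j \<longleftrightarrow> i = j"
  using nth_eq_iff_index_eq[OF distinct_ps] by blast

lemma ps_ne: "ps \<noteq> []"
  using length_ge_3 by auto

lemma hd_eq: "hd ps = ps!0" and last_eq: "last ps = ps!(L - 1)"
  using hd_conv_nth[OF ps_ne] last_conv_nth[OF ps_ne] by auto

lemma pos_edge_Suc: "Suc i < L \<Longrightarrow> pos_edge i (Suc i)"
  using successively_nth[OF successively_ps] .

lemma successively_pos_edge_upt [simp]: "n \<le> L \<Longrightarrow> successively pos_edge [m..<n]"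
  by (rule successively_upt) (use pos_edge_Suc in auto)

lemma successively_pos_edge_upt_flip [simp]: "n \<le> L \<Longrightarrow> successively (\<lambda>i j. pos_edge j i) [m..<n]"
  by (rule successively_upt) (use pos_edge_Suc sym in auto)

lemma last_nbr_in_path: "E (last ps) w \<Longrightarrow> w \<in> set ps"
proof (rule ccontr)
  assume "E (last ps) w" "w \<notin> set ps"
  then have "is_path (ps @ [w])"
    using path edge_in_V sym unfolding is_path_def by (auto simp: successively_append_iff)
  then show False using longest by fastforce
qed

lemma longest_path_rev: "longest_path V E (rev ps)"
  by unfold_locales (use is_path_rev[OF path] longest length_ge_3 in auto)

lemma hd_nbr_in_path: "E (hd ps) w \<Longrightarrow> w \<in> set ps"
  using longest_path.last_nbr_in_path[OF longest_path_rev] by (simp add: last_rev)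

lemma degree_eq_card_nbr_positions:
  assumes "\<And>w. E x w \<Longrightarrow> w \<in> set ps"
  shows "degree V E x = card {i. i < L \<and> E x (ps!i)}"
proof -
  have "{u \<in> V. E x u} = (!) ps ` {i. i < L \<and> E x (ps!i)}"
    using assms set_ps_subset by (auto simp: in_set_conv_nth)
  moreover have "inj_on ((!) ps) {i. i < L \<and> E x (ps!i)}"
    using distinct_ps by (simp add: inj_on_nth)
  ultimately show ?thesis unfolding degree_def by (simp add: card_image)
qed

lemma has_bipartite_hole_shifted:
  assumes X: "\<And>i. i \<in> X \<Longrightarrow> 1 \<le> i \<and> i \<le> \<tau> \<and> i < L" and Y: "\<And>j. j \<in> Y \<Longrightarrow> \<tau> \<le> j \<and> Suc j < L"
    and "s \<le> card X" "t \<le> card Y"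
    and nonadj: "\<And>i j. i \<in> X \<Longrightarrow> j \<in> Y \<Longrightarrow> \<not> E (ps!(i - 1)) (ps!(Suc j))"
  shows "has_bipartite_hole V E s t"
proof (rule has_bipartite_hole_if_card_ge)
  show "(\<lambda>i. ps!(i - 1)) ` X \<subseteq> V" using X nth_in_V by force
  show "(\<lambda>j. ps!(Suc j)) ` Y \<subseteq> V" using Y nth_in_V by auto
  show "(\<lambda>i. ps!(i - 1)) ` X \<inter> (\<lambda>j. ps!(Suc j)) ` Y = {}"
  proof (rule ccontr)
    assume "\<not> ?thesis"
    then obtain i j where ij: "i \<in> X" "j \<in> Y" "ps!(i - 1) = ps!(Suc j)" by auto
    then have "i - 1 = Suc j" using X[OF ij(1)] Y[OF ij(2)] nth_eq_iff[of "i - 1" "Suc j"] by linarith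
    then show False using X[OF ij(1)] Y[OF ij(2)] by linarith
  qed
  have "inj_on (\<lambda>i. ps!(i - 1)) X"
  proof (rule inj_onI)
    fix i i' assume i: "i \<in> X" "i' \<in> X" "ps!(i - 1) = ps!(i' - 1)"
    have "i - 1 < L" "i' - 1 < L" using X[OF i(1)] X[OF i(2)] by arith+
    then have "i - 1 = i' - 1" using i(3) nth_eq_iff by blast
    then show "i = i'" using X[OF i(1)] X[OF i(2)] by arith
  qed
  then show "s \<le> card ((\<lambda>i. ps!(i - 1)) ` X)" using assms(3) by (simp add: card_image)
  have "inj_on (\<lambda>j. ps!(Suc j)) Y"
  proof (rule inj_onI)
    fix j j' assume "j \<in> Y" "j' \<in> Y" "ps!(Suc j) = ps!(Suc j')"
    then show "j = j'" using Y[of j] Y[of j'] nth_eq_iff[of "Suc j" "Suc j'"] by auto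
  qed
  then show "t \<le> card ((\<lambda>j. ps!(Suc j)) ` Y)" using assms(4) by (simp add: card_image)
qed (use nonadj in auto)

lemma longest_path_index_perm:
  assumes "distinct is" "set is = {..<L}" "successively pos_edge is"
  shows "longest_path V E (map ((!) ps) is)" "set (map ((!) ps) is) = set ps"
    "hd (map ((!) ps) is) = ps ! hd is" "last (map ((!) ps) is) = ps ! last is"
proof -
  have len: "length is = L" using assms(1,2) distinct_card by fastforce
  then have ne: "is \<noteq> []" using length_ge_3 by auto
  have "set ps = (!) ps ` {..<L}" by (auto simp: in_set_conv_nth image_iff)
  then show set: "set (map ((!) ps) is) = set ps" using assms(2) by simp
  have "distinct (map ((!) ps) is)" using assms(1,2) distinct_ps by (simp add: distinct_map inj_on_nth)
  moreover have "successively E (map ((!) ps) is)" using assms(3) by (simp add: successively_map)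
  ultimately have "is_path (map ((!) ps) is)" unfolding is_path_def using set set_ps_subset by simp
  moreover have "length qs \<le> length (map ((!) ps) is)" if "is_path qs" for qs
    using longest[OF that] len by simp
  ultimately show "longest_path V E (map ((!) ps) is)"
    using length_ge_3 len by unfold_locales simp_all
  show "hd (map ((!) ps) is) = ps ! hd is" "last (map ((!) ps) is) = ps ! last is"
    using ne by (auto simp: last_map hd_map)
qed

lemma hamiltonian_if_cycle:
  assumes "connected_on V E" "distinct vs" "set vs = set ps" "successively E vs" "E (last vs) (hd vs)"
  shows "hamiltonian V E"
proof -
  have len: "length vs = L" using assms(2,3) distinct_ps distinct_card by metis
  show ?thesis
  proof (cases "set ps = V")
    case True
    then show ?thesis using hamiltonianI[of vs V E] assms len length_ge_3 by auto
  next
    case False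
    text \<open>Otherwise opening the cycle at a vertex with a neighbour off the cycle gives a longer path.\<close>
    obtain y0 where "y0 \<in> V - set ps" using False set_ps_subset by auto
    moreover have "hd ps \<in> set ps" using length_ge_3 by (cases ps) auto
    ultimately obtain x y where xy: "x \<in> set ps" "y \<in> V - set ps" "E x y"
      using connected_on_crossing_edge[OF assms(1) set_ps_subset] by blast
    then obtain i where i: "i < length vs" "vs ! i = x" using assms(3) by (metis in_set_conv_nth)
    have "successively E (take i vs)" "successively E (drop i vs)"
      using assms(4) successively_append_iff[of E "take i vs" "drop i vs"] by auto
    moreover have "i \<noteq> 0 \<Longrightarrow> hd (take i vs) = hd vs" using i by (cases vs) auto
    moreover have "last (drop i vs) = last vs" "drop i vs \<noteq> []" using i by auto
    ultimately have "successively E (drop i vs @ take i vs)"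
      using assms(5) by (cases "i = 0") (auto simp: successively_append_iff)
    moreover have "hd (drop i vs @ take i vs) = x" using i by (simp add: hd_drop_conv_nth)
    moreover have "drop i vs @ take i vs = rotate i vs" using i by (simp add: rotate_drop_take)
    ultimately have "is_path (y # rotate i vs)"
      using xy sym assms(2,3) set_ps_subset unfolding is_path_def by (auto simp: successively_Cons)
    from longest[OF this] show ?thesis using len by simp
  qed
qed

lemma hamiltonian_if_index_cycle:
  assumes "connected_on V E" "distinct is" "set is = {..<L}" "successively pos_edge is"
    "pos_edge (last is) (hd is)"
  shows "hamiltonian V E"
proof -
  note perm = longest_path_index_perm[OF assms(2-4)]
  interpret q: longest_path V E "map ((!) ps) is" by (fact perm(1))
  show ?thesis
    by (rule hamiltonian_if_cycle[OF assms(1) q.distinct_ps perm(2) q.successively_ps])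
      (use perm(3,4) assms(5) in simp)
qed

lemma tail_has_outside_nbr:
  assumes no_cut: "\<And>x. x \<in> V \<Longrightarrow> connected_on (V - {x}) E" and "1 \<le> c" "Suc c < L"
  shows "\<exists>j w. c < j \<and> j < L \<and> E (ps!j) w \<and> w \<notin> (!) ps ` {c..<L}"
proof (rule ccontr)
  assume closed: "\<not> ?thesis"
  have "\<not> connected_on (V - {ps!c}) E"
  proof (rule not_connected_on_Diff_if_closed[where Z = "(!) ps ` {Suc c..<L}"])
    show "(!) ps ` {Suc c..<L} \<subseteq> V - {ps!c}" using nth_in_V nth_eq_iff assms by auto
    show "ps!(L - 1) \<in> (!) ps ` {Suc c..<L}" using assms by (intro image_eqI[where x = "L - 1"]) auto
    show "ps!0 \<in> V - {ps!c}" using nth_in_V nth_eq_iff[of 0 c] assms ps_ne by auto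
    show "ps!0 \<notin> (!) ps ` {Suc c..<L}" using nth_eq_iff[of 0] by fastforce
    fix z w assume "z \<in> (!) ps ` {Suc c..<L}" and zw: "E z w"
    then obtain j where "c < j" "j < L" "z = ps!j" by (auto simp: Suc_le_eq)
    then have "w \<in> (!) ps ` {c..<L}" using closed zw by blast
    then obtain d where "c \<le> d" "d < L" "w = ps!d" by auto
    then show "w \<in> (!) ps ` {Suc c..<L} \<or> w = ps!c" by (cases "d = c") auto
  qed
  then show False using no_cut nth_in_V assms by auto
qed

end

locale nonham_longest_path = longest_path +
  assumes connected: "connected_on V E" and not_hamiltonian: "\<not> hamiltonian V E"
begin

lemma nonham_longest_path_rev: "nonham_longest_path V E (rev ps)"
  by (rule nonham_longest_path.intro[OF longest_path_rev nonham_longest_path_axioms.intro[OF connected not_hamiltonian]])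

lemma nonham_longest_path_index_perm:
  assumes "distinct is" "set is = {..<L}" "successively pos_edge is"
  shows "nonham_longest_path V E (map ((!) ps) is)"
  by (rule nonham_longest_path.intro[OF longest_path_index_perm(1)[OF assms]
        nonham_longest_path_axioms.intro[OF connected not_hamiltonian]])

lemma no_index_cycle:
  assumes "distinct is" "set is = {..<L}" "successively pos_edge is"
  shows "\<not> pos_edge (last is) (hd is)"
  using hamiltonian_if_index_cycle[OF connected assms] not_hamiltonian by blast

lemma ends_nonadjacent: "\<not> E (ps!0) (ps!(L - 1))"
proof
  assume "E (ps!0) (ps!(L - 1))"
  moreover have "0 < L" using ps_ne by simp
  moreover have "\<not> pos_edge (last [0..<L]) (hd [0..<L])"
    by (rule no_index_cycle) (use ps_ne in auto)
  ultimately show False using sym ps_ne by simp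
qed

lemma nonadjacent_pred_first_succ_last:
  assumes "E (ps!0) (ps!a)" "E (ps!b) (ps!(L - 1))" "1 \<le> a" "a \<le> b" "b + 2 \<le> L"
  shows "\<not> E (ps!(a - 1)) (ps!(b + 1))"
proof
  assume e: "E (ps!(a - 1)) (ps!(b + 1))"
  let ?c = "[a..<b+1] @ rev [b+1..<L] @ rev [0..<a]"
  have "\<not> pos_edge (last ?c) (hd ?c)"
  proof (rule no_index_cycle)
    show "distinct ?c" "set ?c = {..<L}" using assms by auto
    show "successively pos_edge ?c"
      using assms e sym by (auto simp: successively_append_iff hd_rev last_rev hd_append simp del: upt_Suc)
  qed
  then show False using assms by (auto simp: hd_rev last_rev hd_append simp del: upt_Suc)
qed

lemma nonadjacent_pred_last_succ_first:
  assumes "E (ps!0) (ps!a)" "E (ps!b) (ps!(L - 1))" "1 \<le> b" "b \<le> a" "a + 2 \<le> L"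
  shows "\<not> E (ps!(b - 1)) (ps!(a + 1))"
proof
  assume e: "E (ps!(b - 1)) (ps!(a + 1))"
  let ?c = "[0..<b] @ [a+1..<L] @ [b..<a+1]"
  have "\<not> pos_edge (last ?c) (hd ?c)"
  proof (rule no_index_cycle)
    show "distinct ?c" "set ?c = {..<L}" using assms by auto
    show "successively pos_edge ?c"
      using assms e sym by (auto simp: successively_append_iff hd_rev last_rev hd_append simp del: upt_Suc)
  qed
  then show False using assms sym by (auto simp: hd_rev last_rev hd_append simp del: upt_Suc)
qed

lemma hd_nbr_position_bounds:
  assumes "a < L" "E (ps!0) (ps!a)"
  shows "1 \<le> a \<and> a + 2 \<le> L"
proof -
  have "a \<noteq> 0" using assms(2) irrefl[of "ps!0"] by (cases a) auto
  moreover have "a \<noteq> L - 1" using assms(2) ends_nonadjacent by auto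
  ultimately show ?thesis using assms(1) by auto
qed

lemma last_nbr_position_bounds:
  assumes "b < L" "E (ps!(L - 1)) (ps!b)"
  shows "1 \<le> b \<and> b + 2 \<le> L"
proof -
  have "b \<noteq> 0" using assms(2) ends_nonadjacent sym[of "ps!(L - 1)" "ps!0"] by (cases b) auto
  moreover have "b \<noteq> L - 1" using assms(2) irrefl by auto
  ultimately show ?thesis using assms(1) by auto
qed

text \<open>If both ends had degree at least k = s + t - 1, the neighbour positions A of the first
  and B of the last end could be split at a threshold so that s predecessors of A and
  t successors of B (or vice versa) span no edge: an (s, t)-bipartite hole.\<close>

lemma endpoint_degree_lt:
  assumes hole_free: "\<not> has_bipartite_hole V E s t" and "0 < s" "0 < t" "s + t = k + 1"
  shows "degree V E (hd ps) < k \<or> degree V E (last ps) < k"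
proof (rule ccontr)
  assume "\<not> ?thesis"
  then have deg: "k \<le> degree V E (ps!0)" "k \<le> degree V E (ps!(L - 1))"
    unfolding hd_eq last_eq by auto
  define A where "A = {i. i < L \<and> E (ps!0) (ps!i)}"
  define B where "B = {i. i < L \<and> E (ps!(L - 1)) (ps!i)}"
  have card_A: "k \<le> card A"
    using deg(1) degree_eq_card_nbr_positions[of "ps!0"] hd_nbr_in_path unfolding A_def hd_eq by simp
  have card_B: "k \<le> card B"
    using deg(2) degree_eq_card_nbr_positions[of "ps!(L - 1)"] last_nbr_in_path
    unfolding B_def last_eq by simp
  have A_range: "1 \<le> a \<and> a + 2 \<le> L" if "a \<in> A" for a
    using that hd_nbr_position_bounds unfolding A_def by blast
  have B_range: "1 \<le> b \<and> b + 2 \<le> L" if "b \<in> B" for b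
    using that last_nbr_position_bounds unfolding B_def by blast
  obtain \<tau> where "(s \<le> card {a\<in>A. a \<le> \<tau>} \<and> t \<le> card {b\<in>B. \<tau> \<le> b})
      \<or> (s \<le> card {b\<in>B. b \<le> \<tau>} \<and> t \<le> card {a\<in>A. \<tau> \<le> a})"
    using threshold_split[of s t A B] assms(2-4) card_A card_B by auto
  then have "has_bipartite_hole V E s t"
  proof
    assume card: "s \<le> card {a\<in>A. a \<le> \<tau>} \<and> t \<le> card {b\<in>B. \<tau> \<le> b}"
    show ?thesis
    proof (rule has_bipartite_hole_shifted[where X = "{a\<in>A. a \<le> \<tau>}" and Y = "{b\<in>B. \<tau> \<le> b}"])
      fix i j assume "i \<in> {a\<in>A. a \<le> \<tau>}" "j \<in> {b\<in>B. \<tau> \<le> b}"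
      then show "\<not> E (ps!(i - 1)) (ps!(Suc j))"
        using nonadjacent_pred_first_succ_last[of i j] A_range[of i] B_range[of j] sym
        unfolding A_def B_def by auto
    qed (use card A_range B_range in force)+
  next
    assume card: "s \<le> card {b\<in>B. b \<le> \<tau>} \<and> t \<le> card {a\<in>A. \<tau> \<le> a}"
    show ?thesis
    proof (rule has_bipartite_hole_shifted[where X = "{b\<in>B. b \<le> \<tau>}" and Y = "{a\<in>A. \<tau> \<le> a}"])
      fix i j assume "i \<in> {b\<in>B. b \<le> \<tau>}" "j \<in> {a\<in>A. \<tau> \<le> a}"
      then show "\<not> E (ps!(i - 1)) (ps!(Suc j))"
        using nonadjacent_pred_last_succ_first[of j i] A_range[of j] B_range[of i] sym
        unfolding A_def B_def by auto
    qed (use card A_range B_range in force)+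
  qed
  then show False using hole_free by contradiction
qed

end

subsection \<open>Rotations of a longest path with an end of low degree\<close>

locale low_degree_end = nonham_longest_path +
  fixes s t k :: nat
  assumes s_pos: "0 < s" and t_pos: "0 < t" and s_t_k: "s + t = k + 1"
    and hole_free: "\<not> has_bipartite_hole V E s t"
    and sigma2_ge: "enat (2 * k) \<le> sigma2 V E"
    and last_degree_lt: "degree V E (ps!(length ps - 1)) < k"
begin

lemma low_degree_adjacent:
  assumes "u \<in> V" "v \<in> V" "u \<noteq> v" "degree V E u < k" "degree V E v < k"
  shows "E u v"
proof (rule ccontr)
  assume "\<not> E u v"
  from degree_sum_ge_if_sigma2_ge[OF sigma2_ge assms(1-3) this] assms(4,5) show False by linarith
qed

lemma first_degree_ge: "k \<le> degree V E (ps!0)"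
proof -
  have "ps!0 \<in> V" "ps!(L - 1) \<in> V" "ps!0 \<noteq> ps!(L - 1)"
    using nth_in_V nth_eq_iff[of 0 "L - 1"] length_ge_3 ps_ne by auto
  from degree_sum_ge_if_sigma2_ge[OF sigma2_ge this ends_nonadjacent]
  show ?thesis using last_degree_lt by linarith
qed

definition path_end :: "nat \<Rightarrow> bool" where
  "path_end j \<longleftrightarrow>
     (\<exists>is. distinct is \<and> set is = {..<L} \<and> successively pos_edge is \<and> hd is = 0 \<and> last is = j)"

lemma path_endI:
  assumes "distinct is" "set is = {..<L}" "successively pos_edge is" "hd is = 0"
  shows "path_end (last is)"
  using assms unfolding path_end_def by blast

lemma path_end_longest_path:
  assumes "path_end j"
  obtains qs where "nonham_longest_path V E qs" "set qs = set ps" "hd qs = ps!0" "last qs = ps!j"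
proof -
  obtain js where js: "distinct js" "set js = {..<L}" "successively pos_edge js" "hd js = 0" "last js = j"
    using assms unfolding path_end_def by blast
  show ?thesis
    using that[OF nonham_longest_path_index_perm[OF js(1-3)]] longest_path_index_perm(2-4)[OF js(1-3)]
      js(4,5) by simp
qed

lemma path_end_less:
  assumes "path_end j"
  shows "j < L"
proof -
  obtain js where js: "distinct js" "set js = {..<L}" "successively pos_edge js" "hd js = 0" "last js = j"
    using assms unfolding path_end_def by blast
  have "length js = L" using js(1,2) distinct_card by fastforce
  then have "js \<noteq> []" using length_ge_3 by auto
  from last_in_set[OF this] show ?thesis using js(2,5) by simp
qed

lemma path_end_degree_lt:
  assumes "path_end j"
  shows "degree V E (ps!j) < k"
proof -
  obtain qs where qs: "nonham_longest_path V E qs" "set qs = set ps" "hd qs = ps!0" "last qs = ps!j"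
    by (rule path_end_longest_path[OF assms])
  have "degree V E (hd qs) < k \<or> degree V E (last qs) < k"
    by (rule nonham_longest_path.endpoint_degree_lt[OF qs(1) hole_free s_pos t_pos s_t_k])
  then show ?thesis using qs(3,4) first_degree_ge by auto
qed

lemma path_end_nbr_in_path:
  assumes "path_end j" "E (ps!j) w"
  shows "w \<in> set ps"
proof -
  obtain qs where qs: "nonham_longest_path V E qs" "set qs = set ps" "hd qs = ps!0" "last qs = ps!j"
    by (rule path_end_longest_path[OF assms(1)])
  interpret q: nonham_longest_path V E qs by (fact qs(1))
  show ?thesis using q.last_nbr_in_path assms(2) qs(2,4) by auto
qed

lemma path_end_adjacent_last:
  assumes "path_end j" "j \<noteq> L - 1"
  shows "E (ps!j) (ps!(L - 1))"
proof (rule low_degree_adjacent)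
  have "j < L" by (rule path_end_less[OF assms(1)])
  then show "ps!j \<in> V" "ps!j \<noteq> ps!(L - 1)" using nth_in_V nth_eq_iff assms(2) by auto
  show "ps!(L - 1) \<in> V" using nth_in_V ps_ne by simp
  show "degree V E (ps!j) < k" by (rule path_end_degree_lt[OF assms(1)])
  show "degree V E (ps!(L - 1)) < k" by (rule last_degree_lt)
qed

lemma path_end_nonadjacent_first:
  assumes "path_end j"
  shows "\<not> E (ps!j) (ps!0)"
proof -
  obtain js where js: "distinct js" "set js = {..<L}" "successively pos_edge js" "hd js = 0" "last js = j"
    using assms unfolding path_end_def by blast
  from no_index_cycle[OF js(1-3)] show ?thesis using js(4,5) by simp
qed

definition first_nbr :: nat where
  "first_nbr = (LEAST j. E (ps!(L - 1)) (ps!j))"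

lemma last_adj_first_nbr: "E (ps!(L - 1)) (ps!first_nbr)"
  and first_nbr_le: "E (ps!(L - 1)) (ps!j) \<Longrightarrow> first_nbr \<le> j"
  and first_nbr_bounds: "1 \<le> first_nbr" "first_nbr + 2 \<le> L"
proof -
  have "E (ps!(L - 2)) (ps!(Suc (L - 2)))" using pos_edge_Suc[of "L - 2"] length_ge_3 by simp
  moreover have "Suc (L - 2) = L - 1" using length_ge_3 by simp
  ultimately have pred: "E (ps!(L - 1)) (ps!(L - 2))" using sym by metis
  show first: "E (ps!(L - 1)) (ps!first_nbr)" unfolding first_nbr_def by (rule LeastI[of "\<lambda>j. E (ps!(L - 1)) (ps!j)", OF pred])
  show le: "first_nbr \<le> j" if "E (ps!(L - 1)) (ps!j)" for j unfolding first_nbr_def by (rule Least_le[of "\<lambda>j. E (ps!(L - 1)) (ps!j)", OF that])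
  show "first_nbr + 2 \<le> L" using le[OF pred] length_ge_3 by simp
  show "1 \<le> first_nbr"
  proof (rule ccontr)
    assume "\<not> 1 \<le> first_nbr"
    then have "first_nbr = 0" by simp
    then show False using first ends_nonadjacent sym[of "ps!(L - 1)" "ps!0"] by simp
  qed
qed

text \<open>The last vertex is adjacent to every vertex from its first neighbour on: each ps!(j+1)
  ends the rotated path ps!0 \<dots> ps!j ps!(L-1) \<dots> ps!(j+1).\<close>

lemma last_adj_from_first_nbr: "first_nbr \<le> j \<Longrightarrow> j + 2 \<le> L \<Longrightarrow> E (ps!(L - 1)) (ps!j)"
proof (induction j)
  case 0
  then show ?case using last_adj_first_nbr by simp
next
  case (Suc j)
  show ?case
  proof (cases "first_nbr = Suc j")
    case True
    then show ?thesis using last_adj_first_nbr by simp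
  next
    case False
    then have ih: "E (ps!j) (ps!(L - 1))" using Suc sym by auto
    let ?is = "[0..<Suc j] @ rev [Suc j..<L]"
    have "path_end (last ?is)"
    proof (rule path_endI)
      show "distinct ?is" "set ?is = {..<L}" "hd ?is = 0" using Suc.prems by (auto simp del: upt_Suc)
      show "successively pos_edge ?is"
        using Suc.prems ih by (auto simp: successively_append_iff hd_rev last_rev hd_append simp del: upt_Suc)
    qed
    moreover have "last ?is = Suc j" using Suc.prems ps_ne by (simp add: last_append last_rev del: upt_Suc)
    ultimately show ?thesis using path_end_adjacent_last[of "Suc j"] Suc.prems sym by simp
  qed
qed

lemma tail_nbr_in_path:
  assumes "first_nbr < e" "e < L" "E (ps!e) w"
  shows "w \<in> set ps"
proof -
  have e1: "E (ps!(e - 1)) (ps!(L - 1))" using last_adj_from_first_nbr[of "e - 1"] assms sym by auto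
  let ?is = "[0..<e] @ rev [e..<L]"
  have "path_end (last ?is)"
  proof (rule path_endI)
    show "distinct ?is" "set ?is = {..<L}" "hd ?is = 0" using assms first_nbr_bounds by (auto simp del: upt_Suc)
    show "successively pos_edge ?is"
      using assms e1 first_nbr_bounds
      by (auto simp: successively_append_iff hd_rev last_rev hd_append simp del: upt_Suc)
  qed
  moreover have "last ?is = e" using assms ps_ne by (simp add: last_append last_rev del: upt_Suc)
  ultimately show ?thesis using path_end_nbr_in_path assms(3) by simp
qed

lemma tail_nbr_index_ge:
  assumes "first_nbr < e" "e < L" "d < L" "E (ps!e) (ps!d)"
  shows "first_nbr \<le> d + 1"
proof (cases "e = L - 1")
  case True
  then show ?thesis using first_nbr_le[of d] assms(4) by simp
next
  case False
  show ?thesis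
  proof (rule ccontr)
    assume "\<not> ?thesis"
    then have dg: "d + 2 \<le> first_nbr" by simp
    have e1: "E (ps!(L - 1)) (ps!(e - 1))" using last_adj_from_first_nbr[of "e - 1"] assms False by auto
    let ?is = "[0..<Suc d] @ [e..<L] @ rev [Suc d..<e]"
    have "path_end (last ?is)"
    proof (rule path_endI)
      show "distinct ?is" "set ?is = {..<L}" "hd ?is = 0" using dg assms by (auto simp del: upt_Suc)
      show "successively pos_edge ?is"
        using dg assms e1 sym by (auto simp: successively_append_iff hd_rev last_rev hd_append simp del: upt_Suc)
    qed
    moreover have "last ?is = Suc d" using dg assms by (simp add: last_append last_rev del: upt_Suc)
    ultimately have "E (ps!(Suc d)) (ps!(L - 1))"
      using path_end_adjacent_last[of "Suc d"] dg first_nbr_bounds by simp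
    then show False using first_nbr_le[of "Suc d"] sym dg by fastforce
  qed
qed

lemma first_nbr_path_end_if_tail_edge:
  assumes "first_nbr < e" "e < L" "E (ps!e) (ps!(first_nbr - 1))"
  shows "path_end first_nbr"
    and "d < L \<Longrightarrow> E (ps!first_nbr) (ps!d) \<Longrightarrow> first_nbr \<le> d + 1"
proof -
  have "e \<noteq> L - 1" using first_nbr_le[of "first_nbr - 1"] assms(3) first_nbr_bounds by fastforce
  then have e1: "E (ps!(L - 1)) (ps!(e - 1))" using last_adj_from_first_nbr[of "e - 1"] assms by auto
  let ?is = "[0..<first_nbr] @ [e..<L] @ rev [first_nbr..<e]"
  have "path_end (last ?is)"
  proof (rule path_endI)
    show "distinct ?is" "set ?is = {..<L}" "hd ?is = 0" using assms first_nbr_bounds by (auto simp del: upt_Suc)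
    show "successively pos_edge ?is"
      using assms e1 first_nbr_bounds sym
      by (auto simp: successively_append_iff hd_rev last_rev hd_append simp del: upt_Suc)
  qed
  moreover have "last ?is = first_nbr" using assms by (simp add: last_append last_rev del: upt_Suc)
  ultimately show "path_end first_nbr" by simp
  show "first_nbr \<le> d + 1" if "d < L" "E (ps!first_nbr) (ps!d)"
  proof (rule ccontr)
    assume "\<not> ?thesis"
    then have dg: "d + 2 \<le> first_nbr" by simp
    let ?js = "[0..<Suc d] @ [first_nbr..<e] @ rev [e..<L] @ rev [Suc d..<first_nbr]"
    have "path_end (last ?js)"
    proof (rule path_endI)
      show "distinct ?js" "set ?js = {..<L}" "hd ?js = 0" using assms dg by (auto simp del: upt_Suc)
      show "successively pos_edge ?js"
        using assms e1 dg that sym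
        by (auto simp: successively_append_iff hd_rev last_rev hd_append simp del: upt_Suc)
    qed
    moreover have "last ?js = Suc d" using dg by (simp add: last_append last_rev del: upt_Suc)
    ultimately have "E (ps!(Suc d)) (ps!(L - 1))"
      using path_end_adjacent_last[of "Suc d"] dg first_nbr_bounds by simp
    then show False using first_nbr_le[of "Suc d"] sym dg by fastforce
  qed
qed

lemma no_tail_edge_to_pred_first_nbr:
  assumes no_cut: "\<And>x. x \<in> V \<Longrightarrow> connected_on (V - {x}) E" and "first_nbr < e" "e < L"
  shows "\<not> E (ps!e) (ps!(first_nbr - 1))"
proof
  assume tail_edge: "E (ps!e) (ps!(first_nbr - 1))"
  note rotation = first_nbr_path_end_if_tail_edge[OF assms(2,3) tail_edge]
  show False
  proof (cases "first_nbr = 1")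
    case True
    then show False
      using path_end_nonadjacent_first[OF rotation(1)] pos_edge_Suc[of 0] sym length_ge_3 by simp
  next
    case False
    then have "1 \<le> first_nbr - 1" "Suc (first_nbr - 1) < L" using first_nbr_bounds by auto
    then obtain j w where jw: "first_nbr - 1 < j" "j < L" "E (ps!j) w"
      "w \<notin> (!) ps ` {first_nbr - 1..<L}"
      using tail_has_outside_nbr[OF no_cut] by blast
    have j: "j = first_nbr \<or> first_nbr < j" using jw(1) by linarith
    then have "w \<in> set ps" using path_end_nbr_in_path[OF rotation(1)] tail_nbr_in_path jw by auto
    then obtain d where d: "d < L" "w = ps!d" by (auto simp: in_set_conv_nth)
    have "first_nbr \<le> d + 1" using j rotation(2) tail_nbr_index_ge[of j d] jw d by auto
    then show False using jw(4) d by auto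
  qed
qed

end

lemma (in nonham_longest_path) last_degree_ge:
  assumes "0 < s" "0 < t" "s + t = k + 1" "\<not> has_bipartite_hole V E s t"
    and "enat (2 * k) \<le> sigma2 V E" and no_cut: "\<And>x. x \<in> V \<Longrightarrow> connected_on (V - {x}) E"
  shows "k \<le> degree V E (last ps)"
proof (rule ccontr)
  assume "\<not> ?thesis"
  then have "degree V E (ps!(length ps - 1)) < k" by (simp add: last_eq)
  with assms(1-5) have "low_degree_end V E ps s t k"
    by (intro low_degree_end.intro low_degree_end_axioms.intro) intro_locales
  then interpret low_degree_end V E ps s t k .
  text \<open>The tail from the first neighbour of the last vertex on would be cut off by ps!first_nbr.\<close>
  have "Suc first_nbr < L" using first_nbr_bounds(2) by simp
  then obtain j w where jw: "first_nbr < j" "j < L" "E (ps!j) w" "w \<notin> (!) ps ` {first_nbr..<L}"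
    using tail_has_outside_nbr[OF no_cut first_nbr_bounds(1)] by blast
  obtain d where d: "d < L" "w = ps!d" using tail_nbr_in_path[OF jw(1-3)] by (auto simp: in_set_conv_nth)
  have "first_nbr \<le> d + 1" using tail_nbr_index_ge[OF jw(1,2) d(1)] jw(3) d(2) by simp
  moreover have "d \<noteq> first_nbr - 1" using no_tail_edge_to_pred_first_nbr[OF no_cut jw(1,2)] jw(3) d(2) by auto
  ultimately show False using jw(4) d by auto
qed

theorem mainTheorem1:
  fixes V :: "'a set" and E :: "'a \<Rightarrow> 'a \<Rightarrow> bool"
  assumes "simple_graph V E"
    and "two_connected V E"
    and "card V \<ge> 3"
    and "sigma2 V E \<ge> enat (2 * bipartite_hole_number V E)"
  shows "hamiltonian V E"
proof (rule ccontr)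
  assume not_ham: "\<not> hamiltonian V E"
  interpret sgraph V E using assms(1) unfolding simple_graph_def by unfold_locales auto
  have conn: "connected_on V E" and no_cut: "\<And>x. x \<in> V \<Longrightarrow> connected_on (V - {x}) E"
    using assms(2) unfolding two_connected_def by auto
  obtain s t where st: "0 < s" "0 < t" "s + t = bipartite_hole_number V E + 1"
    "\<not> has_bipartite_hole V E s t"
    using bipartite_hole_number_witness[OF finite_V] by blast
  obtain u v w where "is_path [u, v, w]" using exists_path3[OF assms(2)] .
  then obtain ps where ps: "is_path ps" "length [u, v, w] \<le> length ps"
    "\<And>qs. is_path qs \<Longrightarrow> length qs \<le> length ps"
    using exists_longest_path by blast
  interpret nonham_longest_path V E ps
    by unfold_locales (use ps conn not_ham in auto)
  interpret rev: nonham_longest_path V E "rev ps" by (rule nonham_longest_path_rev)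
  have "bipartite_hole_number V E \<le> degree V E (last ps)"
    "bipartite_hole_number V E \<le> degree V E (hd ps)"
    using last_degree_ge[OF st(1-4) assms(4) no_cut] rev.last_degree_ge[OF st(1-4) assms(4) no_cut]
    by (simp_all add: last_rev)
  then show False using endpoint_degree_lt[OF st(4,1,2,3)] by simp
qed

end
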